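(* Fix $n,d$ and $J=\{j_1<\cdots<j_\ell\}\subseteq[n]$. There exists a path $C\in\mathcal{P}(n,d)$ with $\mathrm{st}(C)=J$ if and only if $j_k\geq 2k$ for all $1\le k\le\ell$ and $\ell\le d\le n-\ell$. Moreover, in this case such a path is unique.
   Context: $\mathcal{P}(n,d)$ is the set of words $C=C_1\cdots C_n$ in letters $\mathbf{e}$ (east step) and $\mathbf{n}$ (north step) with exactly $d$ letters $\mathbf{e}$. For $C\in\mathcal{P}(n,d)$: scan positions left to right and mark position $i$ with $C_i=\mathbf{e}$ if the number of $j<i$ with $C_j=\mathbf{n}$ equals the number of $j<i$ with $C_j=\mathbf{e}$ that are unmarked; $\mathrm{st}(C)$ is the set of unmarked positions $i$ with $C_i=\mathbf{e}$. *)

theory Defs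
  imports Main
begin

datatype step = E | N

definition paths :: "nat \<Rightarrow> nat \<Rightarrow> step list set" where
  "paths n d = {C. length C = n \<and> length (filter (\<lambda>x. x = E) C) = d}"

text \<open>Arguments: remaining word, current (1-based) position p,
  number a of north steps seen so far, number b of unmarked east steps seen so far.
  An east step at position p is marked iff a = b; the result collects the positions
  of unmarked east steps.\<close>
fun st_aux :: "step list \<Rightarrow> nat \<Rightarrow> nat \<Rightarrow> nat \<Rightarrow> nat set" where
  "st_aux [] p a b = {}"
| "st_aux (N # w) p a b = st_aux w (Suc p) (Suc a) b"
| "st_aux (E # w) p a b =
     (if a = b then st_aux w (Suc p) a b else insert p (st_aux w (Suc p) a (Suc b)))"

definition st :: "step list \<Rightarrow> nat set" where
  "st C = st_aux C 1 0 0"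

end

theory Submission
  imports Defs
begin

text \<open>Reading a word from the right: appending a north step never changes \<open>st\<close>, and
  appending an east step adds the new position to \<open>st\<close> unless the scan marks it, which happens
  exactly when the prefix has as many north steps as unmarked east steps. Since
  \<open>card (st w)\<close> never exceeds the number of north steps of \<open>w\<close>, the last letter of a word, and
  then \<open>st\<close> and the number of east steps of its prefix, can be read off from the length, the
  number of east steps and \<open>st\<close>; induction gives uniqueness. The same right-to-left analysis
  shows the necessity of the conditions, and reversing it builds a word for every admissible
  \<open>J\<close>: put an east step at position \<open>n\<close> if \<open>n \<in> J\<close>, else a north step while east steps may
  still be placed later, else a marked east step.\<close>

abbreviation east_steps :: "step list \<Rightarrow> nat" where
  "east_steps w \<equiv> length (filter (\<lambda>x. x = E) w)"

abbreviation north_steps :: "step list \<Rightarrow> nat" where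
  "north_steps w \<equiv> length (filter (\<lambda>x. x = N) w)"

lemma north_steps_add_east_steps: "north_steps w + east_steps w = length w"
proof (induction w)
  case (Cons x w)
  then show ?case by (cases x) auto
qed simp

lemma st_aux_subset: "st_aux w p a b \<subseteq> {p..<p + length w}"
  by (induction w p a b rule: st_aux.induct) (auto simp: subset_iff, (force)+)

lemma st_aux_snoc_N: "st_aux (w @ [N]) p a b = st_aux w p a b"
  by (induction w p a b rule: st_aux.induct) auto

lemma st_aux_snoc_E:
  "st_aux (w @ [E]) p a b =
    (if a + north_steps w = b + card (st_aux w p a b) then st_aux w p a b
     else insert (p + length w) (st_aux w p a b))"
proof (induction w p a b rule: st_aux.induct)
  case (3 w p a b)
  have "finite (st_aux w (Suc p) a (Suc b))" "p \<notin> st_aux w (Suc p) a (Suc b)"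
    using st_aux_subset[of w "Suc p" a "Suc b"] finite_subset by auto
  with "3.IH" show ?case by auto
qed auto

lemma st_snoc_N: "st (w @ [N]) = st w"
  unfolding st_def by (rule st_aux_snoc_N)

lemma st_snoc_E:
  "st (w @ [E]) = (if north_steps w = card (st w) then st w else insert (length w + 1) (st w))"
  unfolding st_def using st_aux_snoc_E[of w 1 0 0] by simp

lemma st_subset: "st w \<subseteq> {1..length w}"
  unfolding st_def using st_aux_subset[of w 1 0 0] by auto

lemma finite_st: "finite (st w)"
  using st_subset by (rule finite_subset) simp

lemma Suc_length_notin_st: "Suc (length w) \<notin> st w"
  using st_subset by fastforce

lemma card_st_snoc_E_le: "card (st (w @ [E])) \<le> card (st w) + 1"
  by (simp add: st_snoc_E finite_st card_insert_le_m1)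

lemma card_st_le_north_steps: "card (st w) \<le> north_steps w"
proof (induction w rule: rev_induct)
  case (snoc x w)
  then show ?case
    by (cases x) (auto simp: st_snoc_N st_snoc_E finite_st Suc_length_notin_st)
qed (simp add: st_def)

lemma card_st_le_east_steps: "card (st w) \<le> east_steps w"
proof (induction w rule: rev_induct)
  case (snoc x w)
  then show ?case
    using card_st_snoc_E_le[of w] by (cases x) (auto simp: st_snoc_N)
qed (simp add: st_def)

lemma st_eq_st_snoc_Diff: "st w = st (w @ [x]) - {length w + 1}"
  by (cases x) (auto simp: st_snoc_N st_snoc_E Suc_length_notin_st)

lemma snoc_eq_E_iff:
  "x = E \<longleftrightarrow> length w + 1 \<in> st (w @ [x]) \<or> north_steps (w @ [x]) = card (st (w @ [x]))"
proof (cases x)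
  case N
  then show ?thesis
    using card_st_le_north_steps[of w] Suc_length_notin_st[of w] by (simp add: st_snoc_N)
next
  case E
  then show ?thesis by (simp add: st_snoc_E)
qed

lemma st_inject:
  assumes "length C = length C'" "east_steps C = east_steps C'" "st C = st C'"
  shows "C = C'"
  using assms
proof (induction C arbitrary: C' rule: rev_induct)
  case (snoc x w)
  then obtain u y where C': "C' = u @ [y]" and "length u = length w"
    by (metis length_Suc_conv_rev length_append_singleton)
  moreover have "north_steps (w @ [x]) = north_steps C'"
    using snoc.prems north_steps_add_east_steps[of "w @ [x]"] north_steps_add_east_steps[of C']
    by linarith
  ultimately have "x = E \<longleftrightarrow> y = E"
    using snoc.prems unfolding snoc_eq_E_iff[of x w] snoc_eq_E_iff[of y u] by simp
  then have "x = y" by (cases x; cases y) simp_all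
  moreover have "st w = st u"
    using snoc.prems C' \<open>length u = length w\<close> st_eq_st_snoc_Diff[of w x] st_eq_st_snoc_Diff[of u y]
    by simp
  ultimately have "w = u"
    using snoc.IH[of u] snoc.prems C' \<open>length u = length w\<close> by simp
  with C' \<open>x = y\<close> show ?case by simp
qed simp

definition ballot :: "nat set \<Rightarrow> bool" where
  "ballot J \<longleftrightarrow> (\<forall>k\<in>{1..card J}. sorted_list_of_set J ! (k - 1) \<ge> 2 * k)"

lemma sorted_list_of_set_insert_greater:
  assumes "finite J" "\<forall>j\<in>J. j < m"
  shows "sorted_list_of_set (insert m J) = sorted_list_of_set J @ [m]"
proof -
  have "J - {m} = J" using assms(2) by auto
  then show ?thesis
    using assms by (simp add: sorted_list_of_set_insert sorted_insort_is_snoc less_imp_le)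
qed

lemma ballot_insert_greater:
  assumes "finite J" "\<forall>j\<in>J. j < m"
  shows "ballot (insert m J) \<longleftrightarrow> ballot J \<and> 2 * (card J + 1) \<le> m"
proof -
  have "m \<notin> J" using assms(2) by auto
  then have "card (insert m J) = card J + 1" using assms(1) by simp
  moreover have "{1..card J + 1} = insert (card J + 1) {1..card J}" by auto
  ultimately show ?thesis
    unfolding ballot_def sorted_list_of_set_insert_greater[OF assms] by (auto simp: nth_append)
qed

lemma ballot_double_card_le:
  assumes "ballot J" "J \<subseteq> {1..n}"
  shows "2 * card J \<le> n"
proof (cases "J = {}")
  case False
  have "finite J" using assms(2) finite_subset by blast
  then have "card J > 0" using False by auto
  let ?j = "sorted_list_of_set J ! (card J - 1)"
  have "?j \<in> J"
    using \<open>finite J\<close> \<open>card J > 0\<close>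
    by (metis diff_less length_sorted_list_of_set nth_mem set_sorted_list_of_set zero_less_one)
  moreover have "2 * card J \<le> ?j"
    using assms(1) \<open>card J > 0\<close> unfolding ballot_def by auto
  ultimately show ?thesis using assms(2) by auto
qed simp

lemma ballot_st: "ballot (st w)"
proof (induction w rule: rev_induct)
  case (snoc x w)
  show ?case
  proof (cases "x = E \<and> north_steps w \<noteq> card (st w)")
    case True
    then have "card (st w) < north_steps w"
      using card_st_le_north_steps[of w] by auto
    then have "2 * card (st w) + 2 \<le> length w + 1"
      using card_st_le_east_steps[of w] north_steps_add_east_steps[of w]
      by linarith
    moreover have "\<forall>j\<in>st w. j < length w + 1" using st_subset[of w] by auto
    ultimately show ?thesis
      using True snoc.IH by (simp add: st_snoc_E ballot_insert_greater[OF finite_st])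
  next
    case False
    then have "st (w @ [x]) = st w" by (cases x) (auto simp: st_snoc_N st_snoc_E)
    with snoc.IH show ?thesis by simp
  qed
qed (simp add: st_def ballot_def)

lemma exists_path_with_st:
  assumes "J \<subseteq> {1..n}" "ballot J" "card J \<le> d" "d \<le> n - card J"
  shows "\<exists>C. length C = n \<and> east_steps C = d \<and> st C = J"
  using assms
proof (induction n arbitrary: J d)
  case 0
  then show ?case by (intro exI[of _ "[]"]) (simp add: st_def)
next
  case (Suc n)
  have "finite J" using Suc.prems(1) finite_subset by blast
  consider (unmarked) "Suc n \<in> J" | (north) "Suc n \<notin> J" "d \<le> n - card J"
    | (marked) "Suc n \<notin> J" "d = Suc n - card J"
    using Suc.prems(4) by linarith
  then show ?case
  proof cases
    case unmarked
    define J' where "J' = J - {Suc n}"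
    have J: "J = insert (Suc n) J'" and "Suc n \<notin> J'"
      using unmarked by (auto simp: J'_def)
    have J'_less: "\<forall>j\<in>J'. j < Suc n" using Suc.prems(1) by (auto simp: J'_def)
    have "card J = card J' + 1" using J \<open>Suc n \<notin> J'\<close> \<open>finite J\<close> by simp
    moreover have "ballot J'"
      using Suc.prems(2) ballot_insert_greater[OF _ J'_less] J \<open>finite J\<close> by simp
    moreover have "J' \<subseteq> {1..n}" using Suc.prems(1) by (auto simp: J'_def le_Suc_eq)
    moreover have "card J' \<le> d - 1" "d - 1 \<le> n - card J'"
      using Suc.prems(3,4) \<open>card J = card J' + 1\<close> by auto
    ultimately obtain C where C: "length C = n" "east_steps C = d - 1" "st C = J'"
      using Suc.IH[of J' "d - 1"] by auto
    have "north_steps C \<noteq> card (st C)"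
      using C north_steps_add_east_steps[of C] Suc.prems(3,4) \<open>card J = card J' + 1\<close> by simp
    then have "st (C @ [E]) = J" using C J by (simp add: st_snoc_E)
    with C Suc.prems(3) \<open>card J = card J' + 1\<close> show ?thesis
      by (intro exI[of _ "C @ [E]"]) auto
  next
    case north
    have "J \<subseteq> {1..n}" using Suc.prems(1) north(1) by (auto simp: le_Suc_eq)
    then obtain C where "length C = n" "east_steps C = d" "st C = J"
      using Suc.IH north(2) Suc.prems(2,3) by blast
    then show ?thesis by (intro exI[of _ "C @ [N]"]) (simp add: st_snoc_N)
  next
    case marked
    have J_sub: "J \<subseteq> {1..n}" using Suc.prems(1) marked(1) by (auto simp: le_Suc_eq)
    have "2 * card J \<le> n" using Suc.prems(2) J_sub by (rule ballot_double_card_le)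
    then have "card J \<le> d - 1" "d - 1 \<le> n - card J" using marked(2) by auto
    then obtain C where C: "length C = n" "east_steps C = d - 1" "st C = J"
      using Suc.IH J_sub Suc.prems(2) by blast
    have "north_steps C = card (st C)"
      using C north_steps_add_east_steps[of C] marked(2) \<open>2 * card J \<le> n\<close> by simp
    then have "st (C @ [E]) = J" using C by (simp add: st_snoc_E)
    with C marked(2) \<open>2 * card J \<le> n\<close> show ?thesis
      by (intro exI[of _ "C @ [E]"]) auto
  qed
qed

theorem proposition4p14:
  fixes n d :: nat and J :: "nat set"
  assumes "J \<subseteq> {1..n}"
  shows "((\<exists>C\<in>paths n d. st C = J) \<longleftrightarrow>
           ((\<forall>k\<in>{1..card J}. sorted_list_of_set J ! (k - 1) \<ge> 2 * k)
            \<and> card J \<le> d \<and> d \<le> n - card J))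
         \<and> (\<forall>C1\<in>paths n d. \<forall>C2\<in>paths n d. st C1 = J \<longrightarrow> st C2 = J \<longrightarrow> C1 = C2)"
proof -
  have "ballot (st C) \<and> card (st C) \<le> d \<and> d \<le> n - card (st C)" if "C \<in> paths n d" for C
    using that ballot_st card_st_le_east_steps[of C] card_st_le_north_steps[of C]
      north_steps_add_east_steps[of C]
    unfolding paths_def by fastforce
  moreover have "ballot J \<and> card J \<le> d \<and> d \<le> n - card J \<Longrightarrow> \<exists>C\<in>paths n d. st C = J"
    using exists_path_with_st[OF assms] unfolding paths_def by blast
  ultimately show ?thesis
    unfolding ballot_def paths_def by (auto intro: st_inject)
qed

end
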